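(* Let $t\ge3$, let $\mathcal C$ be an $(n,k,r,t)$-SLRC and let $G$ be a minimal repair graph of $\mathcal C$ with source set $S(G)$. Then for every $v\in S(G)$: 1) $|\mathrm{Out}(v)|\ge1$; 2) if $\mathrm{Out}(v)=\{v'\}$, then $\mathrm{Out}^2(v)=\mathrm{Out}(v')\ne\emptyset$; 3) if $\mathrm{Out}(v)=\{v_1\}$ and $\mathrm{Out}(v_1)=\{v_2\}$, then $\mathrm{Out}(v_2)\ne\emptyset$; 4) if $\mathrm{Out}(v)=\{v_1\}$ and $\mathrm{Out}(v_1)=\{v_2\}$, then $|\mathrm{Out}(u)|\ge2$ for every source $u\in\mathrm{In}(v_2)$; 5) if $v,w$ are two distinct sources with $|\mathrm{Out}(v)|=|\mathrm{Out}(w)|=1$, then $\mathrm{Out}(v)\ne\mathrm{Out}(w)$.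
   Context: For an $[n,k]$ linear code $\mathcal C$ over a finite field $\mathbb F$, a recovering set of $i\in[n]$ is a set $R\subseteq[n]\setminus\{i\}$ with nonzero $a_j\in\mathbb F$ such that $x_i=\sum_{j\in R}a_jx_j$ for all $x\in\mathcal C$; standing assumption: recovering sets have size $2\le|R|\le r<k$. $\mathcal C$ is an $(n,k,r,t)$-SLRC if every $E\subseteq[n]$ with $|E|\le t$ can be indexed $\{i_1,\dots,i_{|E|}\}$ so that each $i_\ell$ has a recovering set $R_\ell\subseteq([n]\setminus E)\cup\{i_1,\dots,i_{\ell-1}\}$. A repair graph of $\mathcal C$ is a directed acyclic graph on vertex set $[n]$ such that for every vertex $i$ with nonempty in-neighbourhood $\mathrm{In}(i)$, $\mathrm{In}(i)$ is a recovering set of $i$. A source is a vertex with no in-neighbours. A minimal repair graph is a repair graph with the minimum number of sources among all repair graphs of $\mathcal C$. $\mathrm{Out}(v)$ denotes the out-neighbours of $v$, and $\mathrm{Out}^2(v)=\bigcup_{u\in\mathrm{Out}(v)}\mathrm{Out}(u)\setminus\mathrm{Out}(v)$. *)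

theory Defs
  imports Complex_Main "HOL-Library.Function_Algebras"
begin

text \<open>Words of length n over a field are modelled as functions nat => 'a that
vanish outside the coordinate set [n] = {0..<n}.  Scalar multiplication is pointwise.\<close>

definition cscale :: "'a::field \<Rightarrow> (nat \<Rightarrow> 'a) \<Rightarrow> (nat \<Rightarrow> 'a)" where
  "cscale c x = (\<lambda>i. c * x i)"

lemma vector_space_cscale: "vector_space (cscale :: 'a::field \<Rightarrow> _)"
  by unfold_locales (auto simp: cscale_def plus_fun_def fun_eq_iff algebra_simps)

definition linear_code :: "nat \<Rightarrow> nat \<Rightarrow> (nat \<Rightarrow> 'a::field) set \<Rightarrow> bool" where
  "linear_code n k C \<longleftrightarrow>
     (\<forall>x\<in>C. \<forall>i. n \<le> i \<longrightarrow> x i = 0) \<and>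
     0 \<in> C \<and> (\<forall>x\<in>C. \<forall>y\<in>C. x + y \<in> C) \<and> (\<forall>c. \<forall>x\<in>C. cscale c x \<in> C) \<and>
     vector_space.dim cscale C = k"

definition recovering_set ::
  "nat \<Rightarrow> nat \<Rightarrow> (nat \<Rightarrow> 'a::field) set \<Rightarrow> nat \<Rightarrow> nat set \<Rightarrow> bool" where
  "recovering_set n r C i R \<longleftrightarrow>
     i < n \<and> R \<subseteq> {0..<n} - {i} \<and> 2 \<le> card R \<and> card R \<le> r \<and>
     (\<exists>a. (\<forall>j\<in>R. a j \<noteq> 0) \<and> (\<forall>x\<in>C. x i = (\<Sum>j\<in>R. a j * x j)))"

definition SLRC :: "nat \<Rightarrow> nat \<Rightarrow> nat \<Rightarrow> nat \<Rightarrow> (nat \<Rightarrow> 'a::field) set \<Rightarrow> bool" where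
  "SLRC n k r t C \<longleftrightarrow> linear_code n k C \<and> r < k \<and>
     (\<forall>E. E \<subseteq> {0..<n} \<and> card E \<le> t \<longrightarrow>
        (\<exists>es. distinct es \<and> set es = E \<and>
           (\<forall>l < length es. \<exists>R. recovering_set n r C (es ! l) R \<and>
                 R \<subseteq> ({0..<n} - E) \<union> set (take l es))))"

definition In_nb :: "(nat \<times> nat) set \<Rightarrow> nat \<Rightarrow> nat set" where
  "In_nb G v = {u. (u, v) \<in> G}"

definition Out_nb :: "(nat \<times> nat) set \<Rightarrow> nat \<Rightarrow> nat set" where
  "Out_nb G v = {u. (v, u) \<in> G}"

definition Out2 :: "(nat \<times> nat) set \<Rightarrow> nat \<Rightarrow> nat set" where
  "Out2 G v = (\<Union>u\<in>Out_nb G v. Out_nb G u) - Out_nb G v"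

definition sources :: "nat \<Rightarrow> (nat \<times> nat) set \<Rightarrow> nat set" where
  "sources n G = {v \<in> {0..<n}. In_nb G v = {}}"

definition repair_graph :: "nat \<Rightarrow> nat \<Rightarrow> (nat \<Rightarrow> 'a::field) set \<Rightarrow> (nat \<times> nat) set \<Rightarrow> bool" where
  "repair_graph n r C G \<longleftrightarrow> G \<subseteq> {0..<n} \<times> {0..<n} \<and> acyclic G \<and>
     (\<forall>i\<in>{0..<n}. In_nb G i \<noteq> {} \<longrightarrow> recovering_set n r C i (In_nb G i))"

definition minimal_repair_graph ::
  "nat \<Rightarrow> nat \<Rightarrow> (nat \<Rightarrow> 'a::field) set \<Rightarrow> (nat \<times> nat) set \<Rightarrow> bool" where
  "minimal_repair_graph n r C G \<longleftrightarrow> repair_graph n r C G \<and>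
     (\<forall>G'. repair_graph n r C G' \<longrightarrow> card (sources n G) \<le> card (sources n G'))"

end

theory Submission
  imports Defs
begin

text \<open>Let E be a set of at most t coordinates that contains a source of the repair graph G and
is closed under out-edges. The SLRC property recovers the erased set E sequentially, so giving
every vertex of E the in-edges of its recovering set, and keeping the old edges into the rest of
the graph, yields a repair graph in which no vertex of E is a source; closedness of E is what
keeps it acyclic. Hence a minimal repair graph has no such set. Items 1--3 follow by taking for E
a path of length at most 2 starting at a source. For items 4 and 5, a source u with a single
out-neighbour x is first exchanged with x: x becomes a source and u is recovered from x and the
other in-neighbours of x. This keeps the number of sources, hence minimality, and in the new
graph a closed set of at most three vertices containing a source appears.\<close>

lemma recovering_set_exchange:
  assumes rec: "recovering_set n r C x R" and uR: "u \<in> R"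
  shows "recovering_set n r C u (insert x (R - {u}))"
proof -
  have x_n: "x < n" and R_n: "R \<subseteq> {0..<n} - {x}"
    and card_R: "2 \<le> card R" and card_R': "card R \<le> r"
    using rec unfolding recovering_set_def by auto
  have xR: "x \<notin> R" using R_n by blast
  have finR: "finite R" using card_R by (metis card.infinite not_numeral_le_zero)
  obtain a where a_nz: "\<forall>j\<in>R. a j \<noteq> 0" and a_rec: "\<forall>y\<in>C. y x = (\<Sum>j\<in>R. a j * y j)"
    using rec unfolding recovering_set_def by blast
  have au: "a u \<noteq> 0" using a_nz uR by blast
  \<comment> \<open>solve the recovery equation of x for the coordinate u\<close>
  define a' where "a' j = (if j = x then inverse (a u) else - a j / a u)" for j
  have a'_nz: "\<forall>j\<in>insert x (R - {u}). a' j \<noteq> 0"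
    using a_nz au unfolding a'_def by auto
  have a'_rec: "\<forall>y\<in>C. y u = (\<Sum>j\<in>insert x (R - {u}). a' j * y j)"
  proof
    fix y assume yC: "y \<in> C"
    have y_x: "y x = a u * y u + (\<Sum>j\<in>R - {u}. a j * y j)"
      using a_rec yC sum.remove[OF finR uR, of "\<lambda>j. a j * y j"] by simp
    have "(\<Sum>j\<in>R - {u}. a' j * y j) = (\<Sum>j\<in>R - {u}. - (a j * y j) / a u)"
      using xR by (intro sum.cong) (auto simp: a'_def)
    also have "\<dots> = - (\<Sum>j\<in>R - {u}. a j * y j) / a u"
      by (simp add: sum_divide_distrib[symmetric] sum_negf)
    finally have "(\<Sum>j\<in>insert x (R - {u}). a' j * y j)
        = y x / a u - (\<Sum>j\<in>R - {u}. a j * y j) / a u"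
      using finR xR by (simp add: a'_def divide_inverse)
    also have "\<dots> = y u"
      using au by (simp add: y_x field_simps)
    finally show "y u = (\<Sum>j\<in>insert x (R - {u}). a' j * y j)" ..
  qed
  have card_eq: "card (insert x (R - {u})) = card R"
    using finR xR uR card_R by (simp add: card_Diff_singleton)
  have u_n: "u < n" and sub: "insert x (R - {u}) \<subseteq> {0..<n} - {u}"
    using x_n R_n uR by auto
  show ?thesis
    unfolding recovering_set_def
    by (intro conjI exI[of _ a'] u_n sub a'_nz a'_rec) (simp_all add: card_eq card_R card_R')
qed

lemma acyclic_Un_into:
  assumes "acyclic A" "acyclic B"
    and A_from: "A \<subseteq> (- E) \<times> UNIV" and B_into: "B \<subseteq> UNIV \<times> E"
  shows "acyclic (A \<union> B)"
proof -
  have B_path: "(x, y) \<in> B\<^sup>+" if "(x, y) \<in> (A \<union> B)\<^sup>+" "x \<in> E" for x y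
    using that
  proof (induction rule: trancl_induct)
    case (base y)
    then show ?case using A_from by blast
  next
    case (step y z)
    then have "y \<in> E" using B_into by (blast dest: tranclD2)
    with step show ?case using A_from by (blast intro: trancl_into_trancl)
  qed
  have A_path: "(x, y) \<in> A\<^sup>+" if "(x, y) \<in> (A \<union> B)\<^sup>+" "y \<notin> E" for x y
    using that
  proof (induction rule: trancl_induct)
    case (base y)
    then show ?case using B_into by blast
  next
    case (step y z)
    then have "(y, z) \<in> A" using B_into by blast
    with step show ?case using A_from by (blast intro: trancl_into_trancl)
  qed
  show ?thesis
    using assms(1,2) A_path B_path unfolding acyclic_def by blast
qed

lemma acyclic_if_increasing_rank:
  assumes "\<And>a b. (a, b) \<in> R \<Longrightarrow> f a < (f b :: nat)"
  shows "acyclic R"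
proof -
  have "R \<subseteq> measure f" using assms by auto
  then show ?thesis using wf_acyclic wf_subset wf_measure by blast
qed

lemma repair_graph_subset: "repair_graph n r C G \<Longrightarrow> G \<subseteq> {0..<n} \<times> {0..<n}"
  and repair_graph_acyclic: "repair_graph n r C G \<Longrightarrow> acyclic G"
  by (simp_all add: repair_graph_def)

lemma repair_graph_Out_nb_subset:
  assumes "repair_graph n r C G"
  shows "Out_nb G v \<subseteq> {0..<n}"
  using repair_graph_subset[OF assms] by (auto simp: Out_nb_def)

lemma finite_Out_nb: "repair_graph n r C G \<Longrightarrow> finite (Out_nb G v)"
  by (rule finite_subset[OF repair_graph_Out_nb_subset]) simp_all

lemma sources_subset: "sources n G \<subseteq> {0..<n}"
  by (auto simp: sources_def)

lemma minimal_repair_graph_imp_repair_graph: "minimal_repair_graph n r C G \<Longrightarrow> repair_graph n r C G"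
  by (simp add: minimal_repair_graph_def)

lemma repair_graph_irrefl:
  assumes "repair_graph n r C G"
  shows "(a, a) \<notin> G"
  using repair_graph_acyclic[OF assms] by (auto simp: acyclic_def)

lemma Out2_eq_Out_nb_if_singleton:
  assumes "Out_nb G v = {w}" and "(w, w) \<notin> G"
  shows "Out2 G v = Out_nb G w"
  unfolding Out2_def assms(1) using assms(2) by (auto simp: Out_nb_def)

definition exchange_source :: "(nat \<times> nat) set \<Rightarrow> nat \<Rightarrow> nat \<Rightarrow> (nat \<times> nat) set" where
  "exchange_source G u x = {(a, b) \<in> G. b \<noteq> x} \<union> (\<lambda>a. (a, u)) ` insert x (In_nb G x - {u})"

context
  fixes C :: "(nat \<Rightarrow> 'a::field) set" and n r :: nat and G :: "(nat \<times> nat) set" and u x :: nat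
  assumes rg: "repair_graph n r C G" and u_source: "u \<in> sources n G" and Out_u: "Out_nb G u = {x}"
begin

private lemma source_edge: "(u, x) \<in> G"
  using Out_u by (auto simp: Out_nb_def)

private lemma target_neq_source: "x \<noteq> u"
  using source_edge repair_graph_irrefl[OF rg] by blast

lemma In_nb_exchange_source:
  "In_nb (exchange_source G u x) b =
     (if b = u then insert x (In_nb G x - {u}) else if b = x then {} else In_nb G b)"
  using target_neq_source u_source by (auto simp: In_nb_def exchange_source_def sources_def)

lemma Out_nb_exchange_source: "Out_nb (exchange_source G u x) a \<subseteq> insert u (Out_nb G a - {x})"
  by (auto simp: Out_nb_def exchange_source_def)

lemma sources_exchange_source: "sources n (exchange_source G u x) = insert x (sources n G - {u})"
proof -
  have "x < n" using source_edge repair_graph_subset[OF rg] by auto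
  moreover have "x \<notin> sources n G" using source_edge by (auto simp: sources_def In_nb_def)
  ultimately show ?thesis
    using target_neq_source by (auto simp: sources_def In_nb_exchange_source)
qed

lemma card_sources_exchange_source: "card (sources n (exchange_source G u x)) = card (sources n G)"
proof -
  have fin: "finite (sources n G)" by (simp add: sources_def)
  have "x \<notin> sources n G" using source_edge by (auto simp: sources_def In_nb_def)
  then have "card (insert x (sources n G - {u})) = Suc (card (sources n G - {u}))"
    by (simp add: fin)
  also have "\<dots> = card (sources n G)"
    using fin u_source by (rule card_Suc_Diff1)
  finally show ?thesis by (simp add: sources_exchange_source)
qed

lemma repair_graph_exchange_source: "repair_graph n r C (exchange_source G u x)"
  unfolding repair_graph_def
proof (intro conjI ballI impI)
  show "exchange_source G u x \<subseteq> {0..<n} \<times> {0..<n}"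
    using repair_graph_subset[OF rg] source_edge by (auto simp: exchange_source_def In_nb_def)
next
  let ?A = "{(a, b) \<in> G. b \<noteq> x}" and ?B = "(\<lambda>a. (a, u)) ` insert x (In_nb G x - {u})"
  have "acyclic ?A" using repair_graph_acyclic[OF rg] by (rule acyclic_subset) auto
  moreover have "acyclic ?B"
    by (rule acyclic_if_increasing_rank[of _ "\<lambda>v. if v = u then 1 else 0"])
      (use target_neq_source in auto)
  moreover have "?A \<subseteq> (- {u}) \<times> UNIV" using Out_u by (auto simp: Out_nb_def)
  ultimately show "acyclic (exchange_source G u x)"
    unfolding exchange_source_def by (rule acyclic_Un_into) auto
next
  fix i assume i_n: "i \<in> {0..<n}" and In_i: "In_nb (exchange_source G u x) i \<noteq> {}"
  have rec_G: "recovering_set n r C j (In_nb G j)" if "j \<in> {0..<n}" "In_nb G j \<noteq> {}" for j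
    using rg that by (simp add: repair_graph_def)
  have x_rec: "recovering_set n r C x (In_nb G x)"
    using source_edge repair_graph_subset[OF rg] by (intro rec_G) (auto simp: In_nb_def)
  have "u \<in> In_nb G x" using source_edge by (simp add: In_nb_def)
  then show "recovering_set n r C i (In_nb (exchange_source G u x) i)"
    using recovering_set_exchange[OF x_rec] rec_G[OF i_n] In_i
    by (simp add: In_nb_exchange_source split: if_splits)
qed

end

text \<open>The rank \<rho> is the position in the recovery sequence that the SLRC property provides for E.\<close>

lemma SLRC_recovery_rank:
  assumes "SLRC n k r t C" and "E \<subseteq> {0..<n}" and "card E \<le> t"
  obtains Rec :: "nat \<Rightarrow> nat set" and \<rho> :: "nat \<Rightarrow> nat"
  where "\<And>i. i \<in> E \<Longrightarrow> recovering_set n r C i (Rec i)"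
    and "\<And>i j. i \<in> E \<Longrightarrow> j \<in> Rec i \<Longrightarrow> j \<in> E \<Longrightarrow> \<rho> j < \<rho> i"
proof -
  obtain es where es: "distinct es" "set es = E"
    and es_rec: "\<forall>l < length es. \<exists>R. recovering_set n r C (es ! l) R \<and>
                    R \<subseteq> ({0..<n} - E) \<union> set (take l es)"
    using assms unfolding SLRC_def by blast
  then obtain Rf where Rf: "\<And>l. l < length es \<Longrightarrow>
      recovering_set n r C (es ! l) (Rf l) \<and> Rf l \<subseteq> ({0..<n} - E) \<union> set (take l es)"
    by metis
  define \<rho> where "\<rho> = the_inv_into {..<length es} (nth es)"
  have \<rho>_nth: "\<rho> (es ! l) = l" if "l < length es" for l
    unfolding \<rho>_def using that es(1) by (intro the_inv_into_f_f inj_on_nth) auto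
  have E_nth: "\<exists>l < length es. i = es ! l" if "i \<in> E" for i
    using that es(2) by (auto simp: in_set_conv_nth)
  show thesis
  proof (rule that[of "\<lambda>i. Rf (\<rho> i)" \<rho>])
    fix i assume "i \<in> E"
    then obtain l where "l < length es" "i = es ! l" using E_nth by blast
    then show "recovering_set n r C i (Rf (\<rho> i))" using Rf \<rho>_nth by simp
  next
    fix i j assume "i \<in> E" "j \<in> Rf (\<rho> i)" "j \<in> E"
    obtain l where l: "l < length es" "i = es ! l" using E_nth \<open>i \<in> E\<close> by blast
    then have "j \<in> Rf l" using \<open>j \<in> Rf (\<rho> i)\<close> \<rho>_nth by simp
    then have "j \<in> set (take l es)" using Rf[OF l(1)] \<open>j \<in> E\<close> by blast
    then obtain m where "m < l" "j = es ! m" by (auto simp: in_set_conv_nth)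
    then show "\<rho> j < \<rho> i" using l \<rho>_nth by simp
  qed
qed

lemma repair_graph_recover_closed_set:
  fixes \<rho> :: "nat \<Rightarrow> nat"
  assumes rg: "repair_graph n r C G" and E_n: "E \<subseteq> {0..<n}"
    and closed: "\<forall>a\<in>E. Out_nb G a \<subseteq> E"
    and Rec: "\<And>i. i \<in> E \<Longrightarrow> recovering_set n r C i (Rec i)"
    and rank: "\<And>i j. i \<in> E \<Longrightarrow> j \<in> Rec i \<Longrightarrow> j \<in> E \<Longrightarrow> \<rho> j < \<rho> i"
  shows "\<exists>G'. repair_graph n r C G' \<and> sources n G' = sources n G - E"
proof -
  let ?A = "{(a, b) \<in> G. b \<notin> E}" and ?B = "{(j, i). i \<in> E \<and> j \<in> Rec i}"
  have In_nb_G': "In_nb (?A \<union> ?B) i = (if i \<in> E then Rec i else In_nb G i)" for i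
    by (auto simp: In_nb_def)
  have Rec_n: "Rec i \<subseteq> {0..<n}" and Rec_ne: "Rec i \<noteq> {}" if "i \<in> E" for i
    using Rec[OF that] by (auto simp: recovering_set_def)
  have "acyclic ?A" using repair_graph_acyclic[OF rg] by (rule acyclic_subset) auto
  moreover have "acyclic ?B"
    by (rule acyclic_if_increasing_rank[of _ "\<lambda>v. if v \<in> E then Suc (\<rho> v) else 0"])
      (auto dest: rank)
  moreover have "?A \<subseteq> (- E) \<times> UNIV" using closed by (auto simp: Out_nb_def)
  ultimately have "acyclic (?A \<union> ?B)" by (rule acyclic_Un_into) auto
  moreover have "?A \<union> ?B \<subseteq> {0..<n} \<times> {0..<n}"
    using repair_graph_subset[OF rg] E_n Rec_n by blast
  moreover have "recovering_set n r C i (In_nb (?A \<union> ?B) i)"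
    if "i \<in> {0..<n}" "In_nb (?A \<union> ?B) i \<noteq> {}" for i
    using that rg Rec by (simp add: In_nb_G' repair_graph_def split: if_splits)
  ultimately have "repair_graph n r C (?A \<union> ?B)" by (simp add: repair_graph_def)
  moreover have "sources n (?A \<union> ?B) = sources n G - E"
    using Rec_ne by (auto simp: sources_def In_nb_G')
  ultimately show ?thesis by blast
qed

lemma minimal_repair_graph_closed_set_no_source:
  assumes "SLRC n k r t C" and min: "minimal_repair_graph n r C G"
    and E_n: "E \<subseteq> {0..<n}" and "card E \<le> t" and closed: "\<forall>a\<in>E. Out_nb G a \<subseteq> E"
  shows "E \<inter> sources n G = {}"
proof (rule ccontr)
  assume "E \<inter> sources n G \<noteq> {}"
  have rg: "repair_graph n r C G" using min by (rule minimal_repair_graph_imp_repair_graph)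
  obtain Rec and \<rho> :: "nat \<Rightarrow> nat" where "\<And>i. i \<in> E \<Longrightarrow> recovering_set n r C i (Rec i)"
    and "\<And>i j. i \<in> E \<Longrightarrow> j \<in> Rec i \<Longrightarrow> j \<in> E \<Longrightarrow> \<rho> j < \<rho> i"
    using SLRC_recovery_rank[OF assms(1) E_n \<open>card E \<le> t\<close>] by blast
  then obtain G' where G': "repair_graph n r C G'" "sources n G' = sources n G - E"
    using repair_graph_recover_closed_set[OF rg E_n closed] by blast
  have "card (sources n G) \<le> card (sources n G')"
    using min G'(1) by (simp add: minimal_repair_graph_def)
  moreover have "card (sources n G - E) < card (sources n G)"
    using \<open>E \<inter> sources n G \<noteq> {}\<close> by (intro psubset_card_mono) (auto simp: sources_def)
  ultimately show False using G'(2) by simp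
qed

lemma minimal_repair_graph_exchange_source:
  assumes min: "minimal_repair_graph n r C G"
    and "u \<in> sources n G" and "Out_nb G u = {x}"
  shows "minimal_repair_graph n r C (exchange_source G u x)"
proof -
  have rg: "repair_graph n r C G" using min by (rule minimal_repair_graph_imp_repair_graph)
  show ?thesis
    using min repair_graph_exchange_source[OF rg assms(2,3)]
      card_sources_exchange_source[OF rg assms(2,3)]
    by (simp add: minimal_repair_graph_def)
qed

context
  fixes C :: "(nat \<Rightarrow> 'a::field) set" and n k r t :: nat and G :: "(nat \<times> nat) set"
  assumes slrc: "SLRC n k r t C" and min: "minimal_repair_graph n r C G"
begin

private lemma rg: "repair_graph n r C G"
  using min by (rule minimal_repair_graph_imp_repair_graph)

lemma minimal_repair_graph_Out_nb_source_nonempty: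
  assumes "1 \<le> t" and v: "v \<in> sources n G"
  shows "Out_nb G v \<noteq> {}"
proof
  assume "Out_nb G v = {}"
  then have "\<forall>a\<in>{v}. Out_nb G a \<subseteq> {v}" by simp
  moreover have "{v} \<subseteq> {0..<n}" using v sources_subset by blast
  moreover have "card {v} \<le> t" using assms(1) by simp
  ultimately show False
    using minimal_repair_graph_closed_set_no_source[OF slrc min, of "{v}"] v by blast
qed

lemma minimal_repair_graph_Out_nb_second_nonempty:
  assumes "2 \<le> t" and v: "v \<in> sources n G" and Out_v: "Out_nb G v = {v'}"
  shows "Out_nb G v' \<noteq> {}"
proof
  assume "Out_nb G v' = {}"
  then have "\<forall>a\<in>{v, v'}. Out_nb G a \<subseteq> {v, v'}" using Out_v by simp
  moreover have "{v, v'} \<subseteq> {0..<n}"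
    using v sources_subset Out_v repair_graph_Out_nb_subset[OF rg, of v] by blast
  moreover have "card {v, v'} \<le> t" using assms(1) by (simp add: card_insert_if)
  ultimately show False
    using minimal_repair_graph_closed_set_no_source[OF slrc min, of "{v, v'}"] v by blast
qed

lemma minimal_repair_graph_Out_nb_third_nonempty:
  assumes "3 \<le> t" and v: "v \<in> sources n G"
    and Out_v: "Out_nb G v = {v1}" and Out_v1: "Out_nb G v1 = {v2}"
  shows "Out_nb G v2 \<noteq> {}"
proof
  assume "Out_nb G v2 = {}"
  then have "\<forall>a\<in>{v, v1, v2}. Out_nb G a \<subseteq> {v, v1, v2}" using Out_v Out_v1 by simp
  moreover have "{v, v1, v2} \<subseteq> {0..<n}"
    using v sources_subset Out_v Out_v1 repair_graph_Out_nb_subset[OF rg] by blast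
  moreover have "card {v, v1, v2} \<le> t" using assms(1) by (simp add: card_insert_if)
  ultimately show False
    using minimal_repair_graph_closed_set_no_source[OF slrc min, of "{v, v1, v2}"] v by blast
qed

lemma minimal_repair_graph_card_Out_nb_source_into_third:
  assumes "3 \<le> t" and v: "v \<in> sources n G"
    and Out_v: "Out_nb G v = {v1}" and Out_v1: "Out_nb G v1 = {v2}"
    and u: "u \<in> sources n G" "u \<in> In_nb G v2"
  shows "2 \<le> card (Out_nb G u)"
proof (rule ccontr)
  assume "\<not> 2 \<le> card (Out_nb G u)"
  then have "card (Out_nb G u) \<le> Suc 0" by simp
  moreover have "v2 \<in> Out_nb G u" using u(2) by (simp add: In_nb_def Out_nb_def)
  ultimately have Out_u: "Out_nb G u = {v2}"
    using card_le_Suc0_iff_eq[OF finite_Out_nb[OF rg]] by blast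
  have "v1 \<noteq> v2" using Out_v1 repair_graph_irrefl[OF rg] by (auto simp: Out_nb_def)
  then have "u \<noteq> v" using Out_u Out_v by auto
  let ?H = "exchange_source G u v2"
  have min_H: "minimal_repair_graph n r C ?H"
    using minimal_repair_graph_exchange_source[OF min u(1) Out_u] .
  have "v \<in> sources n ?H"
    using sources_exchange_source[OF rg u(1) Out_u] v \<open>u \<noteq> v\<close> by blast
  moreover have "\<forall>a\<in>{v, v1, u}. Out_nb ?H a \<subseteq> {v, v1, u}"
    using Out_nb_exchange_source[OF rg u(1) Out_u] Out_v Out_v1 Out_u by blast
  moreover have "{v, v1, u} \<subseteq> {0..<n}"
    using Out_v repair_graph_Out_nb_subset[OF rg, of v] sources_subset[of n G] v u by auto
  moreover have "card {v, v1, u} \<le> t" using assms(1) by (simp add: card_insert_if)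
  ultimately show False
    using minimal_repair_graph_closed_set_no_source[OF slrc min_H, of "{v, v1, u}"] by blast
qed

lemma minimal_repair_graph_Out_nb_sources_distinct:
  assumes "2 \<le> t" and v: "v \<in> sources n G" and w: "w \<in> sources n G" "w \<noteq> v"
    and card_Out: "card (Out_nb G v) = 1" "card (Out_nb G w) = 1"
  shows "Out_nb G v \<noteq> Out_nb G w"
proof
  assume Out_eq: "Out_nb G v = Out_nb G w"
  obtain x where Out_w: "Out_nb G w = {x}" using card_Out(2) by (auto simp: card_Suc_eq)
  let ?H = "exchange_source G w x"
  have min_H: "minimal_repair_graph n r C ?H"
    using minimal_repair_graph_exchange_source[OF min w(1) Out_w] .
  have "v \<in> sources n ?H"
    using sources_exchange_source[OF rg w(1) Out_w] v w(2) by blast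
  moreover have "\<forall>a\<in>{v, w}. Out_nb ?H a \<subseteq> {v, w}"
    using Out_nb_exchange_source[OF rg w(1) Out_w] Out_eq Out_w by blast
  moreover have "{v, w} \<subseteq> {0..<n}" using sources_subset[of n G] v w by auto
  moreover have "card {v, w} \<le> t" using assms(1) by (simp add: card_insert_if)
  ultimately show False
    using minimal_repair_graph_closed_set_no_source[OF slrc min_H, of "{v, w}"] by blast
qed

end

theorem corollary1:
  fixes C :: "(nat \<Rightarrow> 'a::{field,finite}) set"
    and n k r t :: nat and G :: "(nat \<times> nat) set"
  assumes "t \<ge> 3"
    and "SLRC n k r t C"
    and "minimal_repair_graph n r C G"
  shows "\<forall>v \<in> sources n G.
     card (Out_nb G v) \<ge> 1 \<and>
     (\<forall>v'. Out_nb G v = {v'} \<longrightarrow> Out2 G v = Out_nb G v' \<and> Out_nb G v' \<noteq> {}) \<and>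
     (\<forall>v1 v2. Out_nb G v = {v1} \<and> Out_nb G v1 = {v2} \<longrightarrow> Out_nb G v2 \<noteq> {}) \<and>
     (\<forall>v1 v2. Out_nb G v = {v1} \<and> Out_nb G v1 = {v2} \<longrightarrow>
        (\<forall>u \<in> sources n G \<inter> In_nb G v2. card (Out_nb G u) \<ge> 2)) \<and>
     (\<forall>w \<in> sources n G. w \<noteq> v \<and> card (Out_nb G v) = 1 \<and> card (Out_nb G w) = 1 \<longrightarrow>
        Out_nb G v \<noteq> Out_nb G w)"
proof -
  have rg: "repair_graph n r C G"
    using assms(3) by (rule minimal_repair_graph_imp_repair_graph)
  have t: "1 \<le> t" "2 \<le> t" "3 \<le> t" using assms(1) by simp_all
  show ?thesis
  proof (intro ballI conjI allI impI)
    fix v assume v: "v \<in> sources n G"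
    show "card (Out_nb G v) \<ge> 1"
      using minimal_repair_graph_Out_nb_source_nonempty[OF assms(2,3) t(1) v] finite_Out_nb[OF rg]
      by (simp add: Suc_le_eq card_gt_0_iff)
    fix v' assume Out_v: "Out_nb G v = {v'}"
    show "Out2 G v = Out_nb G v'"
      using Out_v repair_graph_irrefl[OF rg] by (rule Out2_eq_Out_nb_if_singleton)
    show "Out_nb G v' \<noteq> {}"
      using minimal_repair_graph_Out_nb_second_nonempty[OF assms(2,3) t(2) v Out_v] .
  next
    fix v v1 v2 assume "v \<in> sources n G" "Out_nb G v = {v1} \<and> Out_nb G v1 = {v2}"
    then show "Out_nb G v2 \<noteq> {}"
      using minimal_repair_graph_Out_nb_third_nonempty[OF assms(2,3) t(3)] by blast
  next
    fix v v1 v2 u assume "v \<in> sources n G" "Out_nb G v = {v1} \<and> Out_nb G v1 = {v2}"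
      and "u \<in> sources n G \<inter> In_nb G v2"
    then show "2 \<le> card (Out_nb G u)"
      using minimal_repair_graph_card_Out_nb_source_into_third[OF assms(2,3) t(3)] by blast
  next
    fix v w assume "v \<in> sources n G" "w \<in> sources n G"
      and "w \<noteq> v \<and> card (Out_nb G v) = 1 \<and> card (Out_nb G w) = 1"
    then show "Out_nb G v \<noteq> Out_nb G w"
      using minimal_repair_graph_Out_nb_sources_distinct[OF assms(2,3) t(2)] by blast
  qed
qed

end
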